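(* Let $F:\mathbb{R}^n\to\mathbb{R}$ be a convex differentiable function and assume there exists a minimizer $x_*$ of $F$. Let $\xi^{(1)},\dots,\xi^{(T)}$ be i.i.d. random variables. Let $\mu_x,\mu_y\in[0,1)$, and let $z^{(1)},\dots,z^{(T)}$ be arbitrary (random) iterates produced by a base optimizer, with the Generalized Primal Averaging sequences defined by $x^{(1)}=z^{(1)}$ and $$y^{(t)}=\mu_y x^{(t)}+(1-\mu_y)z^{(t)},\qquad x^{(t+1)}=\mu_x x^{(t)}+(1-\mu_x)z^{(t+1)}.$$ Let $\bar{x}^{(T)}=\frac1T\sum_{t=1}^T x^{(t)}$. Then $$\mathbb{E}[F(\bar{x}^{(T)})-F(x_* )]\le \frac1T\sum_{t=1}^T\mathbb{E}[\langle\nabla F(y^{(t)}),z^{(t)}-x_*\rangle]+\frac{\mu_x}{1-\mu_x}\frac1T\mathbb{E}[F(x^{(1)})-F(x_* )]$$ $$-\frac{1}{1-\mu_y}\frac1T\sum_{t=1}^T\mathbb{E}[B_F(y^{(t)},x^{(t)})]-\frac{\mu_y}{1-\mu_y}\frac1T\sum_{t=1}^T\mathbb{E}[B_F(x^{(t)},y^{(t)})]-\frac{\mu_x}{1-\mu_x}\frac1T\sum_{t=1}^T\mathbb{E}[B_F(x^{(t-1)},x^{(t)})],$$ with the convention $x^{(0)}:=x^{(1)}$.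
   Context: $B_F(a,b)=F(a)-F(b)-\langle\nabla F(b),a-b\rangle$ denotes the Bregman divergence of $F$, for $a,b\in\mathbb{R}^n$. The iterates $z^{(t)}$ are random (depending on the samples $\xi^{(t)}$) and all expectations are assumed finite. *)

theory Defs
  imports "HOL-Probability.Probability"
begin

definition bregman :: "('a::euclidean_space \<Rightarrow> real) \<Rightarrow> ('a \<Rightarrow> 'a) \<Rightarrow> 'a \<Rightarrow> 'a \<Rightarrow> real" where
  "bregman F gF a b = F a - F b - gF b \<bullet> (a - b)"

text \<open>Generalized Primal Averaging x-sequence, indexed from 1:
  x 1 = z 1,  x (t+1) = mu_x x t + (1 - mu_x) z (t+1); convention x 0 := x 1.\<close>
fun gpa_x :: "real \<Rightarrow> (nat \<Rightarrow> 'a::real_vector) \<Rightarrow> nat \<Rightarrow> 'a" where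
  "gpa_x mu z 0 = z 1"
| "gpa_x mu z (Suc t) =
     (if t = 0 then z 1 else mu *\<^sub>R gpa_x mu z t + (1 - mu) *\<^sub>R z (Suc t))"

definition gpa_y :: "real \<Rightarrow> real \<Rightarrow> (nat \<Rightarrow> 'a::real_vector) \<Rightarrow> nat \<Rightarrow> 'a" where
  "gpa_y mux muy z t = muy *\<^sub>R gpa_x mux z t + (1 - muy) *\<^sub>R z t"

end

theory Submission
  imports Defs
begin

text \<open>
  With \<open>c = \<mu>\<^sub>x / (1 - \<mu>\<^sub>x)\<close> the averaging recursion reads
  \<open>z\<^sub>t - x\<^sub>t = c (x\<^sub>t - x\<^sub>t\<^sub>-\<^sub>1)\<close>, and \<open>y\<^sub>t\<close> interpolates \<open>x\<^sub>t\<close> and \<open>z\<^sub>t\<close>.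
  Expanding the Bregman divergences then gives an exact identity for
  \<open>F x\<^sub>t - F x\<^sub>*\<close> whose only remainder is \<open>- B\<^sub>F(x\<^sub>*, y\<^sub>t) \<le> 0\<close> (convexity).
  Summing over \<open>t\<close>, the terms \<open>c (F x\<^sub>t\<^sub>-\<^sub>1 - F x\<^sub>t)\<close> telescope to at most
  \<open>c (F x\<^sub>1 - F x\<^sub>*)\<close>, and Jensen's inequality bounds \<open>F\<close> at the average by the
  average of \<open>F x\<^sub>t\<close>. The resulting bound holds for every sample path, so it
  survives integration.
\<close>

lemma bregman_nonneg:
  fixes F :: "'a::euclidean_space \<Rightarrow> real"
  assumes cvx: "convex_on UNIV F"
    and grad: "(F has_derivative (\<lambda>h. gradF b \<bullet> h)) (at b)"
  shows "0 \<le> bregman F gradF a b"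
proof -
  define \<phi> where "\<phi> = (\<lambda>t::real. F (b + t *\<^sub>R (a - b)))"
  have "convex_on UNIV \<phi>"
  proof (rule convex_onI)
    fix t s u :: real
    have "b + ((1 - t) * s + t * u) *\<^sub>R (a - b)
        = (1 - t) *\<^sub>R (b + s *\<^sub>R (a - b)) + t *\<^sub>R (b + u *\<^sub>R (a - b))"
      by (simp add: algebra_simps)
    moreover assume "0 < t" "t < 1"
    ultimately show "\<phi> ((1 - t) *\<^sub>R s + t *\<^sub>R u) \<le> (1 - t) * \<phi> s + t * \<phi> u"
      using cvx by (simp add: \<phi>_def convex_on_def)
  qed simp
  have "((\<lambda>t::real. b + t *\<^sub>R (a - b)) has_derivative (\<lambda>t. t *\<^sub>R (a - b))) (at 0)"
    by (auto intro!: derivative_eq_intros)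
  from has_derivative_compose[OF this, of F "\<lambda>h. gradF b \<bullet> h"] grad
  have "(\<phi> has_field_derivative (gradF b \<bullet> (a - b))) (at 0)"
    by (simp add: \<phi>_def o_def has_field_derivative_def mult.commute[of _ "gradF b \<bullet> (a - b)"])
  from convex_on_imp_above_tangent[OF \<open>convex_on UNIV \<phi>\<close> _ _ _ this, of 1]
  have "gradF b \<bullet> (a - b) \<le> \<phi> 1 - \<phi> 0" by simp
  then show ?thesis
    by (simp add: \<phi>_def bregman_def)
qed

lemma gpa_step_identity:
  fixes F :: "'a::euclidean_space \<Rightarrow> real"
  assumes momentum: "c *\<^sub>R (x - x') = z - x"
    and interp: "y = \<mu> *\<^sub>R x + (1 - \<mu>) *\<^sub>R z"
    and \<mu>: "\<mu> \<noteq> 1"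
  shows "F x - F v = g y \<bullet> (z - v) + c * (F x' - F x)
     - 1 / (1 - \<mu>) * bregman F g y x - \<mu> / (1 - \<mu>) * bregman F g x y
     - c * bregman F g x' x - bregman F g v y"
proof -
  have "c * (g x \<bullet> (x' - x)) = - (g x \<bullet> (z - x))"
    using arg_cong[OF momentum, of "inner (g x)"] by (simp add: algebra_simps)
  then have B\<^sub>x\<^sub>x: "c * bregman F g x' x = c * (F x' - F x) + g x \<bullet> (z - x)"
    by (simp add: bregman_def algebra_simps)
  have "g x \<bullet> (y - x) = (1 - \<mu>) * (g x \<bullet> (z - x))"
    unfolding interp by (simp add: algebra_simps)
  then have B\<^sub>y\<^sub>x: "1 / (1 - \<mu>) * bregman F g y x = (F y - F x) / (1 - \<mu>) - g x \<bullet> (z - x)"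
    using \<mu> by (simp add: bregman_def field_simps)
  have g\<^sub>y: "g y \<bullet> (x - y) = - (1 - \<mu>) * (g y \<bullet> (z - x))"
    unfolding interp by (simp add: algebra_simps)
  have B\<^sub>x\<^sub>y: "\<mu> / (1 - \<mu>) * bregman F g x y = \<mu> / (1 - \<mu>) * (F x - F y) + \<mu> * (g y \<bullet> (z - x))"
    unfolding bregman_def g\<^sub>y using \<mu> by (simp add: field_simps)
  have "g y \<bullet> (z - y) = \<mu> * (g y \<bullet> (z - x))"
    unfolding interp by (simp add: algebra_simps)
  then have B\<^sub>v\<^sub>y: "bregman F g v y = F v - F y + g y \<bullet> (z - v) - \<mu> * (g y \<bullet> (z - x))"
    by (simp add: bregman_def inner_diff_right)
  have "(F y - F x) / (1 - \<mu>) + \<mu> / (1 - \<mu>) * (F x - F y) = F y - F x"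
    using \<mu> by (simp add: divide_simps) (simp add: algebra_simps)
  with B\<^sub>x\<^sub>x B\<^sub>y\<^sub>x B\<^sub>x\<^sub>y B\<^sub>v\<^sub>y show ?thesis
    by linarith
qed

lemma gpa_z_minus_x:
  assumes "1 \<le> t" and "\<mu> \<noteq> 1"
  shows "(\<mu> / (1 - \<mu>)) *\<^sub>R (gpa_x \<mu> z t - gpa_x \<mu> z (t - 1)) = z t - gpa_x \<mu> z t"
proof (cases "t = 1")
  case False
  with assms(1) obtain s where t: "t = Suc s" and "s \<noteq> 0"
    by (cases t) auto
  then have x\<^sub>t: "gpa_x \<mu> z t = \<mu> *\<^sub>R gpa_x \<mu> z s + (1 - \<mu>) *\<^sub>R z t"
    by simp
  have "gpa_x \<mu> z t - gpa_x \<mu> z s = (1 - \<mu>) *\<^sub>R (z t - gpa_x \<mu> z s)"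
    unfolding x\<^sub>t by (simp add: algebra_simps)
  then have "(\<mu> / (1 - \<mu>)) *\<^sub>R (gpa_x \<mu> z t - gpa_x \<mu> z s) = \<mu> *\<^sub>R (z t - gpa_x \<mu> z s)"
    using assms(2) by simp
  also have "\<dots> = z t - gpa_x \<mu> z t"
    unfolding x\<^sub>t by (simp add: algebra_simps)
  finally show ?thesis
    using t by simp
qed (simp add: numeral_eq_Suc)

lemma gpa_step_bound:
  fixes F :: "'a::euclidean_space \<Rightarrow> real"
  assumes cvx: "convex_on UNIV F"
    and grad: "\<And>x. (F has_derivative (\<lambda>h. gradF x \<bullet> h)) (at x)"
    and t: "1 \<le> t" and "\<mu>\<^sub>x \<noteq> 1" "\<mu>\<^sub>y \<noteq> 1"
  shows "F (gpa_x \<mu>\<^sub>x z t) - F v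
    \<le> gradF (gpa_y \<mu>\<^sub>x \<mu>\<^sub>y z t) \<bullet> (z t - v)
     + \<mu>\<^sub>x / (1 - \<mu>\<^sub>x) * (F (gpa_x \<mu>\<^sub>x z (t - 1)) - F (gpa_x \<mu>\<^sub>x z t))
     - 1 / (1 - \<mu>\<^sub>y) * bregman F gradF (gpa_y \<mu>\<^sub>x \<mu>\<^sub>y z t) (gpa_x \<mu>\<^sub>x z t)
     - \<mu>\<^sub>y / (1 - \<mu>\<^sub>y) * bregman F gradF (gpa_x \<mu>\<^sub>x z t) (gpa_y \<mu>\<^sub>x \<mu>\<^sub>y z t)
     - \<mu>\<^sub>x / (1 - \<mu>\<^sub>x) * bregman F gradF (gpa_x \<mu>\<^sub>x z (t - 1)) (gpa_x \<mu>\<^sub>x z t)"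
proof -
  have "0 \<le> bregman F gradF v (gpa_y \<mu>\<^sub>x \<mu>\<^sub>y z t)"
    by (intro bregman_nonneg cvx grad)
  with gpa_step_identity[OF gpa_z_minus_x[OF t \<open>\<mu>\<^sub>x \<noteq> 1\<close>, of z] gpa_y_def \<open>\<mu>\<^sub>y \<noteq> 1\<close>,
      where F = F and g = gradF and v = v]
  show ?thesis
    by linarith
qed

lemma gpa_sum_bound:
  fixes F :: "'a::euclidean_space \<Rightarrow> real" and z :: "nat \<Rightarrow> 'a"
  assumes cvx: "convex_on UNIV F"
    and grad: "\<And>x. (F has_derivative (\<lambda>h. gradF x \<bullet> h)) (at x)"
    and minim: "\<And>x. F v \<le> F x"
    and \<mu>\<^sub>x: "0 \<le> \<mu>\<^sub>x" "\<mu>\<^sub>x < 1" and \<mu>\<^sub>y: "\<mu>\<^sub>y \<noteq> 1"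
  shows "(\<Sum>t=1..T. F (gpa_x \<mu>\<^sub>x z t) - F v)
    \<le> (\<Sum>t=1..T. gradF (gpa_y \<mu>\<^sub>x \<mu>\<^sub>y z t) \<bullet> (z t - v))
     + \<mu>\<^sub>x / (1 - \<mu>\<^sub>x) * (F (gpa_x \<mu>\<^sub>x z 1) - F v)
     - 1 / (1 - \<mu>\<^sub>y) * (\<Sum>t=1..T. bregman F gradF (gpa_y \<mu>\<^sub>x \<mu>\<^sub>y z t) (gpa_x \<mu>\<^sub>x z t))
     - \<mu>\<^sub>y / (1 - \<mu>\<^sub>y) * (\<Sum>t=1..T. bregman F gradF (gpa_x \<mu>\<^sub>x z t) (gpa_y \<mu>\<^sub>x \<mu>\<^sub>y z t))
     - \<mu>\<^sub>x / (1 - \<mu>\<^sub>x) * (\<Sum>t=1..T. bregman F gradF (gpa_x \<mu>\<^sub>x z (t - 1)) (gpa_x \<mu>\<^sub>x z t))"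
    (is "_ \<le> ?L + ?c * _ - ?B\<^sub>y\<^sub>x - ?B\<^sub>x\<^sub>y - ?c * ?B\<^sub>x\<^sub>x")
proof -
  let ?x = "gpa_x \<mu>\<^sub>x z" and ?y = "gpa_y \<mu>\<^sub>x \<mu>\<^sub>y z"
  have "0 \<le> ?c"
    using \<mu>\<^sub>x by simp
  have telescope: "(\<Sum>t=1..T. F (?x (t - 1)) - F (?x t)) = F (?x 0) - F (?x T)"
    using sum_lessThan_telescope'[of "\<lambda>t. F (?x t)" T]
    by (simp add: sum.atLeast1_atMost_eq del: gpa_x.simps)
  have "(\<Sum>t=1..T. F (?x t) - F v)
      \<le> (\<Sum>t=1..T. gradF (?y t) \<bullet> (z t - v) + ?c * (F (?x (t - 1)) - F (?x t))
          - 1 / (1 - \<mu>\<^sub>y) * bregman F gradF (?y t) (?x t)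
          - \<mu>\<^sub>y / (1 - \<mu>\<^sub>y) * bregman F gradF (?x t) (?y t)
          - ?c * bregman F gradF (?x (t - 1)) (?x t))"
    using \<mu>\<^sub>x \<mu>\<^sub>y by (intro sum_mono gpa_step_bound[OF cvx grad]) auto
  also have "\<dots> = ?L + ?c * (F (?x 0) - F (?x T)) - ?B\<^sub>y\<^sub>x - ?B\<^sub>x\<^sub>y - ?c * ?B\<^sub>x\<^sub>x"
    using telescope by (simp only: sum.distrib sum_subtractf sum_distrib_left[symmetric])
  also have "\<dots> \<le> ?L + ?c * (F (?x 1) - F v) - ?B\<^sub>y\<^sub>x - ?B\<^sub>x\<^sub>y - ?c * ?B\<^sub>x\<^sub>x"
  proof -
    have "F (?x 0) - F (?x T) \<le> F (?x 1) - F v"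
      using minim[of "?x T"] by simp
    from mult_left_mono[OF this \<open>0 \<le> ?c\<close>] show ?thesis
      by linarith
  qed
  finally show ?thesis .
qed

lemma gpa_average_bound:
  fixes F :: "'a::euclidean_space \<Rightarrow> real" and z :: "nat \<Rightarrow> 'a"
  assumes cvx: "convex_on UNIV F"
    and grad: "\<And>x. (F has_derivative (\<lambda>h. gradF x \<bullet> h)) (at x)"
    and minim: "\<And>x. F v \<le> F x"
    and \<mu>\<^sub>x: "0 \<le> \<mu>\<^sub>x" "\<mu>\<^sub>x < 1" and \<mu>\<^sub>y: "\<mu>\<^sub>y \<noteq> 1"
    and T: "1 \<le> T"
  shows "F ((1 / real T) *\<^sub>R (\<Sum>t=1..T. gpa_x \<mu>\<^sub>x z t)) - F v
    \<le> (1 / real T) * (\<Sum>t=1..T. gradF (gpa_y \<mu>\<^sub>x \<mu>\<^sub>y z t) \<bullet> (z t - v))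
     + \<mu>\<^sub>x / (1 - \<mu>\<^sub>x) * (1 / real T) * (F (gpa_x \<mu>\<^sub>x z 1) - F v)
     - 1 / (1 - \<mu>\<^sub>y) * (1 / real T) * (\<Sum>t=1..T.
          bregman F gradF (gpa_y \<mu>\<^sub>x \<mu>\<^sub>y z t) (gpa_x \<mu>\<^sub>x z t))
     - \<mu>\<^sub>y / (1 - \<mu>\<^sub>y) * (1 / real T) * (\<Sum>t=1..T.
          bregman F gradF (gpa_x \<mu>\<^sub>x z t) (gpa_y \<mu>\<^sub>x \<mu>\<^sub>y z t))
     - \<mu>\<^sub>x / (1 - \<mu>\<^sub>x) * (1 / real T) * (\<Sum>t=1..T.
          bregman F gradF (gpa_x \<mu>\<^sub>x z (t - 1)) (gpa_x \<mu>\<^sub>x z t))"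
proof -
  let ?x = "gpa_x \<mu>\<^sub>x z"
  have "0 \<le> 1 / real T"
    by simp
  have "F ((1 / real T) *\<^sub>R (\<Sum>t=1..T. ?x t)) \<le> (\<Sum>t=1..T. (1 / real T) * F (?x t))"
    unfolding scaleR_sum_right using T by (intro convex_on_sum[OF _ _ cvx]) auto
  also have "\<dots> = (1 / real T) * (\<Sum>t=1..T. F (?x t) - F v) + F v"
    using T by (simp add: sum_subtractf sum_divide_distrib algebra_simps)
  finally have "F ((1 / real T) *\<^sub>R (\<Sum>t=1..T. ?x t)) - F v
      \<le> (1 / real T) * (\<Sum>t=1..T. F (?x t) - F v)"
    by simp
  also note mult_left_mono[OF gpa_sum_bound[OF cvx grad minim \<mu>\<^sub>x \<mu>\<^sub>y] \<open>0 \<le> 1 / real T\<close>, of z T]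
  finally show ?thesis
    by (simp only: ring_distribs mult_ac)
qed

lemma integral_le_has_bochner_integral:
  fixes f g :: "'a \<Rightarrow> real"
  assumes "integrable M f" and "has_bochner_integral M g r"
    and "\<And>x. x \<in> space M \<Longrightarrow> f x \<le> g x"
  shows "integral\<^sup>L M f \<le> r"
  using integral_mono[OF assms(1) integrable.intros[OF assms(2)] assms(3)]
  by (simp add: has_bochner_integral_integral_eq[OF assms(2)])

theorem theorem1:
  fixes M :: "'w measure" and N :: "'b measure"
    and F :: "'a::euclidean_space \<Rightarrow> real" and gradF :: "'a \<Rightarrow> 'a"
    and xstar :: 'a and xi :: "nat \<Rightarrow> 'w \<Rightarrow> 'b" and z :: "nat \<Rightarrow> 'w \<Rightarrow> 'a"
    and mux muy :: real and T :: nat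
  assumes P: "prob_space M"
    and cvx: "convex_on UNIV F"
    and grad: "\<And>x. (F has_derivative (\<lambda>h. gradF x \<bullet> h)) (at x)"
    and minim: "\<And>x. F xstar \<le> F x"
    and xi_rv: "\<And>t. t \<in> {1..T} \<Longrightarrow> xi t \<in> measurable M N"
    and xi_indep: "prob_space.indep_vars M (\<lambda>_. N) xi {1..T}"
    and xi_ident: "\<And>t. t \<in> {1..T} \<Longrightarrow> distr M N (xi t) = distr M N (xi 1)"
    and mux: "0 \<le> mux" "mux < 1" and muy: "0 \<le> muy" "muy < 1"
    and T: "1 \<le> T"
    and z_rv: "\<And>t. t \<in> {1..T} \<Longrightarrow> z t \<in> borel_measurable M"
    and int_avg: "integrable M (\<lambda>\<omega>. F ((1 / real T) *\<^sub>R (\<Sum>t=1..T. gpa_x mux (\<lambda>s. z s \<omega>) t)) - F xstar)"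
    and int_lin: "\<And>t. t \<in> {1..T} \<Longrightarrow>
       integrable M (\<lambda>\<omega>. gradF (gpa_y mux muy (\<lambda>s. z s \<omega>) t) \<bullet> (z t \<omega> - xstar))"
    and int_x1: "integrable M (\<lambda>\<omega>. F (gpa_x mux (\<lambda>s. z s \<omega>) 1) - F xstar)"
    and int_b1: "\<And>t. t \<in> {1..T} \<Longrightarrow>
       integrable M (\<lambda>\<omega>. bregman F gradF (gpa_y mux muy (\<lambda>s. z s \<omega>) t) (gpa_x mux (\<lambda>s. z s \<omega>) t))"
    and int_b2: "\<And>t. t \<in> {1..T} \<Longrightarrow>
       integrable M (\<lambda>\<omega>. bregman F gradF (gpa_x mux (\<lambda>s. z s \<omega>) t) (gpa_y mux muy (\<lambda>s. z s \<omega>) t))"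
    and int_b3: "\<And>t. t \<in> {1..T} \<Longrightarrow>
       integrable M (\<lambda>\<omega>. bregman F gradF (gpa_x mux (\<lambda>s. z s \<omega>) (t - 1)) (gpa_x mux (\<lambda>s. z s \<omega>) t))"
  shows "(\<integral>\<omega>. F ((1 / real T) *\<^sub>R (\<Sum>t=1..T. gpa_x mux (\<lambda>s. z s \<omega>) t)) - F xstar \<partial>M)
    \<le> (1 / real T) * (\<Sum>t=1..T. \<integral>\<omega>. gradF (gpa_y mux muy (\<lambda>s. z s \<omega>) t) \<bullet> (z t \<omega> - xstar) \<partial>M)
     + mux / (1 - mux) * (1 / real T) * (\<integral>\<omega>. F (gpa_x mux (\<lambda>s. z s \<omega>) 1) - F xstar \<partial>M)
     - 1 / (1 - muy) * (1 / real T) * (\<Sum>t=1..T. \<integral>\<omega>.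
          bregman F gradF (gpa_y mux muy (\<lambda>s. z s \<omega>) t) (gpa_x mux (\<lambda>s. z s \<omega>) t) \<partial>M)
     - muy / (1 - muy) * (1 / real T) * (\<Sum>t=1..T. \<integral>\<omega>.
          bregman F gradF (gpa_x mux (\<lambda>s. z s \<omega>) t) (gpa_y mux muy (\<lambda>s. z s \<omega>) t) \<partial>M)
     - mux / (1 - mux) * (1 / real T) * (\<Sum>t=1..T. \<integral>\<omega>.
          bregman F gradF (gpa_x mux (\<lambda>s. z s \<omega>) (t - 1)) (gpa_x mux (\<lambda>s. z s \<omega>) t) \<partial>M)"
  by (rule integral_le_has_bochner_integral[OF int_avg _
        gpa_average_bound[OF cvx grad minim mux less_imp_neq[OF muy(2)] T]])
    (intro has_bochner_integral_diff has_bochner_integral_add has_bochner_integral_mult_right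
      has_bochner_integral_sum has_bochner_integral_integrable int_lin int_x1 int_b1 int_b2 int_b3; simp)

end
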